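(* Let $\tau\colon X\to B$ be a fibre bundle of simplicial sets whose base $B$ and whose fibre $F$ are partial groups (that is, reduced $N$-simplicial sets with inversion). Then the total space $X$ is again a partial group, i.e. a reduced $N$-simplicial set with inversion. In other words, the category of partial groups is closed under extensions (fibre bundles).
   Context: A simplicial set $X$ is reduced if $X_0$ is a single point $v$; its unit is $1_X=s_0(v)\in X_1$. The enumerating operator $E_n\colon X_n\to X_1\times\cdots\times X_1$ ($n$ factors) sends an $n$-simplex $\sigma\colon\Delta[n]\to X$ to the tuple of its edges $(\sigma|_{\{0,1\}},\sigma|_{\{1,2\}},\dots,\sigma|_{\{n-1,n\}})$. $X$ is an $N$-simplicial set if $E_n$ is injective for all $n\ge1$; a simplex with edges $x_1,\dots,x_n$ is then written $[x_1|\dots|x_n]$. The product operator $\Pi\colon X_n\to X_1$ sends $\sigma$ to its edge from vertex $0$ to vertex $n$. The opposite simplicial set $X^{op}$ has $X^{op}_n=X_n$, $d_i^{op}=d_{n-i}$, $s_i^{op}=s_{n-i}$. An inversion on a reduced $N$-simplicial set $X$ is a simplicial map $\nu\colon X\to X^{op}$ with $\nu\circ\nu=\mathrm{Id}$ such that for every $x\in X_n$ ($n\ge1$) the tuple $[\nu(x)|x]$ is a $2n$-simplex of $X$ with $\Pi([\nu(x)|x])=1_X$. A partial group is (identified with) a reduced $N$-simplicial set with inversion. A simplicial map $\tau\colon X\to B$ is a fibre bundle with fibre $F$ if $\tau$ is onto and for every simplex $b\colon\Delta[n]\to B$ there is an isomorphism $F\times\Delta[n]\cong X^b$ over $\Delta[n]$,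 where $X^b=\Delta[n]\times_B X$ is the pullback. *)

theory Defs
  imports Main
begin

text \<open>A monotone map [m] -> [n] is represented by a function nat => nat whose
  values on {0..m} are monotone and bounded by n.\<close>

definition mono_map :: "nat \<Rightarrow> nat \<Rightarrow> (nat \<Rightarrow> nat) \<Rightarrow> bool" where
  "mono_map m n \<theta> \<longleftrightarrow> (\<forall>i\<le>m. \<theta> i \<le> n) \<and> (\<forall>i j. i \<le> j \<and> j \<le> m \<longrightarrow> \<theta> i \<le> \<theta> j)"

record 'a sset =
  simp :: "nat \<Rightarrow> 'a set"
  sop :: "nat \<Rightarrow> nat \<Rightarrow> (nat \<Rightarrow> nat) \<Rightarrow> 'a \<Rightarrow> 'a"

definition simplicial_set :: "'a sset \<Rightarrow> bool" where
  "simplicial_set X \<longleftrightarrow>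
     (\<forall>m n \<theta> x. mono_map m n \<theta> \<and> x \<in> simp X n \<longrightarrow> sop X m n \<theta> x \<in> simp X m) \<and>
     (\<forall>n x. x \<in> simp X n \<longrightarrow> sop X n n (\<lambda>i. i) x = x) \<and>
     (\<forall>k m n \<psi> \<theta> x. mono_map k m \<psi> \<and> mono_map m n \<theta> \<and> x \<in> simp X n \<longrightarrow>
         sop X k m \<psi> (sop X m n \<theta> x) = sop X k n (\<theta> \<circ> \<psi>) x) \<and>
     (\<forall>m n \<theta> \<theta>' x. mono_map m n \<theta> \<and> (\<forall>i\<le>m. \<theta> i = \<theta>' i) \<and> x \<in> simp X n \<longrightarrow>
         sop X m n \<theta> x = sop X m n \<theta>' x)"

definition smap :: "'a sset \<Rightarrow> 'b sset \<Rightarrow> (nat \<Rightarrow> 'a \<Rightarrow> 'b) \<Rightarrow> bool" where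
  "smap X Y f \<longleftrightarrow>
     (\<forall>n x. x \<in> simp X n \<longrightarrow> f n x \<in> simp Y n) \<and>
     (\<forall>m n \<theta> x. mono_map m n \<theta> \<and> x \<in> simp X n \<longrightarrow>
         f m (sop X m n \<theta> x) = sop Y m n \<theta> (f n x))"

definition siso :: "'a sset \<Rightarrow> 'b sset \<Rightarrow> (nat \<Rightarrow> 'a \<Rightarrow> 'b) \<Rightarrow> bool" where
  "siso X Y f \<longleftrightarrow> smap X Y f \<and> (\<forall>n. bij_betw (f n) (simp X n) (simp Y n))"

text \<open>The standard n-simplex Delta[n]: its m-simplices are monotone maps
  [m] -> [n], written as sorted lists of length m+1 with entries <= n.\<close>

definition Delta :: "nat \<Rightarrow> nat list sset" where
  "Delta n = \<lparr> simp = (\<lambda>m. {xs. length xs = Suc m \<and> sorted xs \<and> (\<forall>x\<in>set xs. x \<le> n)}),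
               sop = (\<lambda>m k \<theta> xs. map (\<lambda>j. xs ! \<theta> j) [0..<Suc m]) \<rparr>"

definition prod_sset :: "'a sset \<Rightarrow> 'b sset \<Rightarrow> ('a \<times> 'b) sset" where
  "prod_sset X Y = \<lparr> simp = (\<lambda>n. simp X n \<times> simp Y n),
                     sop = (\<lambda>m n \<theta> p. (sop X m n \<theta> (fst p), sop Y m n \<theta> (snd p))) \<rparr>"

definition pullback_sset ::
  "'a sset \<Rightarrow> 'c sset \<Rightarrow> (nat \<Rightarrow> 'a \<Rightarrow> 'b) \<Rightarrow> (nat \<Rightarrow> 'c \<Rightarrow> 'b) \<Rightarrow> ('a \<times> 'c) sset" where
  "pullback_sset A C f g = \<lparr> simp = (\<lambda>n. {(a, c). a \<in> simp A n \<and> c \<in> simp C n \<and> f n a = g n c}),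
                     sop = (\<lambda>m n \<theta> p. (sop A m n \<theta> (fst p), sop C m n \<theta> (snd p))) \<rparr>"

definition char_map :: "'b sset \<Rightarrow> nat \<Rightarrow> 'b \<Rightarrow> nat \<Rightarrow> nat list \<Rightarrow> 'b" where
  "char_map B n b = (\<lambda>m xs. sop B m n (\<lambda>j. xs ! j) b)"

definition fibre_over :: "'x sset \<Rightarrow> 'b sset \<Rightarrow> (nat \<Rightarrow> 'x \<Rightarrow> 'b) \<Rightarrow> nat \<Rightarrow> 'b \<Rightarrow> (nat list \<times> 'x) sset" where
  "fibre_over X B \<tau> n b = pullback_sset (Delta n) X (char_map B n b) \<tau>"

definition fibre_bundle :: "'x sset \<Rightarrow> 'b sset \<Rightarrow> 'f sset \<Rightarrow> (nat \<Rightarrow> 'x \<Rightarrow> 'b) \<Rightarrow> bool" where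
  "fibre_bundle X B F \<tau> \<longleftrightarrow>
     smap X B \<tau> \<and>
     (\<forall>n. \<tau> n ` simp X n = simp B n) \<and>
     (\<forall>n b. b \<in> simp B n \<longrightarrow>
        (\<exists>\<phi>. siso (prod_sset F (Delta n)) (fibre_over X B \<tau> n b) \<phi> \<and>
             (\<forall>m p. p \<in> simp (prod_sset F (Delta n)) m \<longrightarrow> fst (\<phi> m p) = snd p)))"

definition reduced :: "'a sset \<Rightarrow> bool" where
  "reduced X \<longleftrightarrow> (\<exists>v. simp X 0 = {v})"

definition unit_of :: "'a sset \<Rightarrow> 'a" where
  "unit_of X = sop X 1 0 (\<lambda>_. 0) (THE v. simp X 0 = {v})"

definition edge :: "'a sset \<Rightarrow> nat \<Rightarrow> nat \<Rightarrow> 'a \<Rightarrow> 'a" where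
  "edge X n i x = sop X 1 n (\<lambda>j. i + j) x"

definition enum_op :: "'a sset \<Rightarrow> nat \<Rightarrow> 'a \<Rightarrow> 'a list" where
  "enum_op X n x = map (\<lambda>i. edge X n i x) [0..<n]"

definition prod_op :: "'a sset \<Rightarrow> nat \<Rightarrow> 'a \<Rightarrow> 'a" where
  "prod_op X n x = sop X 1 n (\<lambda>j. if j = 0 then 0 else n) x"

definition N_simplicial :: "'a sset \<Rightarrow> bool" where
  "N_simplicial X \<longleftrightarrow> (\<forall>n\<ge>1. inj_on (enum_op X n) (simp X n))"

text \<open>The opposite simplicial set: d_i^op = d_{n-i}, s_i^op = s_{n-i};
  i.e. theta^op acts as the conjugate of theta by the order reversals.\<close>

definition opp :: "'a sset \<Rightarrow> 'a sset" where
  "opp X = \<lparr> simp = simp X, sop = (\<lambda>m n \<theta> x. sop X m n (\<lambda>j. n - \<theta> (m - j)) x) \<rparr>"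

definition inversion :: "'a sset \<Rightarrow> (nat \<Rightarrow> 'a \<Rightarrow> 'a) \<Rightarrow> bool" where
  "inversion X \<nu> \<longleftrightarrow>
     smap X (opp X) \<nu> \<and>
     (\<forall>n x. x \<in> simp X n \<longrightarrow> \<nu> n (\<nu> n x) = x) \<and>
     (\<forall>n x. n \<ge> 1 \<and> x \<in> simp X n \<longrightarrow>
        (\<exists>y \<in> simp X (2 * n). enum_op X (2 * n) y = enum_op X n (\<nu> n x) @ enum_op X n x
                               \<and> prod_op X (2 * n) y = unit_of X))"

definition partial_group :: "'a sset \<Rightarrow> bool" where
  "partial_group X \<longleftrightarrow> simplicial_set X \<and> reduced X \<and> N_simplicial X \<and> (\<exists>\<nu>. inversion X \<nu>)"

end

theory Submission
  imports Defs
begin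

text \<open>
  A reduced N-simplicial set X admits an inversion as soon as
  (i) every simplex [x_1|\<dots>|x_m] extends, for each 1 \<le> k \<le> m, to a simplex
  [u|x_1|\<dots>|x_m] with u x_1 \<dots> x_k = 1, and
  (ii) a 2-simplex [a|b] is determined by b and its product ab.
  Iterating (i) produces, for every x, a simplex [y|x] whose arcs symmetric about the middle vertex
  are units; by (ii) its first half y is the same for all such choices, and x \<mapsto> y is an inversion.
  Conversely a partial group satisfies (i) and (ii), so both properties characterise partial groups.

  Both properties pass from base and fibre to the total space of a fibre bundle: project to B, use
  the property there, and lift through a trivialization over the resulting simplex to use it in F.
  For (i) the unit edge of X above the unit edge [0, k + 1] of the base simplex need not correspond
  to the unit of F; this is repaired by lifting a degenerate simplex of X through the trivialization.
\<close>

definition arc :: "'a sset \<Rightarrow> nat \<Rightarrow> nat \<Rightarrow> nat \<Rightarrow> 'a \<Rightarrow> 'a" where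
  "arc X n a b x = sop X 1 n (\<lambda>j. if j = 0 then a else b) x"

lemma mono_map_arc: "a \<le> b \<Longrightarrow> b \<le> n \<Longrightarrow> mono_map 1 n (\<lambda>j. if j = 0 then a else b)"
  unfolding mono_map_def by auto

lemma mono_map_comp: "mono_map k m \<psi> \<Longrightarrow> mono_map m n \<theta> \<Longrightarrow> mono_map k n (\<theta> \<circ> \<psi>)"
  unfolding mono_map_def by auto

lemma mono_map_front: "mono_map n (2 * n) (\<lambda>j. j)"
  by (auto simp: mono_map_def)

definition triangle :: "nat \<Rightarrow> nat \<Rightarrow> nat \<Rightarrow> nat \<Rightarrow> nat" where
  "triangle a b c = (\<lambda>j. if j = 0 then a else if j = 1 then b else c)"

lemma mono_map_triangle: "a \<le> b \<Longrightarrow> b \<le> c \<Longrightarrow> c \<le> n \<Longrightarrow> mono_map 2 n (triangle a b c)"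
  unfolding triangle_def mono_map_def by auto

locale simplicial =
  fixes X :: "'a sset"
  assumes simplicial_set: "simplicial_set X"
begin

lemma sop_closed: "mono_map m n \<theta> \<Longrightarrow> x \<in> simp X n \<Longrightarrow> sop X m n \<theta> x \<in> simp X m"
  using simplicial_set unfolding simplicial_set_def by blast

lemma sop_id: "x \<in> simp X n \<Longrightarrow> sop X n n (\<lambda>i. i) x = x"
  using simplicial_set unfolding simplicial_set_def by blast

lemma sop_comp: "mono_map k m \<psi> \<Longrightarrow> mono_map m n \<theta> \<Longrightarrow> x \<in> simp X n \<Longrightarrow>
    sop X k m \<psi> (sop X m n \<theta> x) = sop X k n (\<theta> \<circ> \<psi>) x"
  using simplicial_set unfolding simplicial_set_def by blast

lemma sop_cong: "mono_map m n \<theta> \<Longrightarrow> (\<And>i. i \<le> m \<Longrightarrow> \<theta> i = \<theta>' i) \<Longrightarrow> x \<in> simp X n \<Longrightarrow>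
    sop X m n \<theta> x = sop X m n \<theta>' x"
  using simplicial_set unfolding simplicial_set_def by blast

lemma arc_closed: "a \<le> b \<Longrightarrow> b \<le> n \<Longrightarrow> x \<in> simp X n \<Longrightarrow> arc X n a b x \<in> simp X 1"
  unfolding arc_def by (rule sop_closed[OF mono_map_arc])

lemma arc_sop:
  assumes "mono_map m n \<theta>" "x \<in> simp X n" "i \<le> j" "j \<le> m"
  shows "arc X m i j (sop X m n \<theta> x) = arc X n (\<theta> i) (\<theta> j) x"
proof -
  have "arc X m i j (sop X m n \<theta> x) = sop X 1 n (\<theta> \<circ> (\<lambda>k. if k = 0 then i else j)) x"
    unfolding arc_def using assms by (intro sop_comp mono_map_arc) auto
  also have "\<dots> = arc X n (\<theta> i) (\<theta> j) x"
    unfolding arc_def using assms by (intro sop_cong mono_map_comp[OF mono_map_arc]) auto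
  finally show ?thesis .
qed

lemma arc_of_edge: "x \<in> simp X 1 \<Longrightarrow> arc X 1 0 1 x = x"
  unfolding arc_def using sop_id[of x 1] sop_cong[of 1 1 "\<lambda>i. i" "\<lambda>j. if j = 0 then 0 else 1" x]
  by (metis (no_types, lifting) One_nat_def le_Suc_eq le_zero_eq mono_map_def)

lemma edge_eq_arc: "i < n \<Longrightarrow> x \<in> simp X n \<Longrightarrow> edge X n i x = arc X n i (Suc i) x"
  unfolding edge_def arc_def by (rule sop_cong) (auto simp: mono_map_def)

lemma prod_op_eq_arc: "prod_op X n x = arc X n 0 n x"
  unfolding prod_op_def arc_def by simp

lemma enum_op_eq_arcs: "x \<in> simp X n \<Longrightarrow> enum_op X n x = map (\<lambda>i. arc X n i (Suc i) x) [0..<n]"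
  unfolding enum_op_def by (auto simp: edge_eq_arc)

end

locale reduced_N = simplicial +
  assumes reduced: "reduced X" and N_simplicial: "N_simplicial X"
begin

definition vertex :: 'a where "vertex = (THE v. simp X 0 = {v})"

abbreviation one :: 'a where "one \<equiv> unit_of X"

lemma simp_0: "simp X 0 = {vertex}"
  using reduced unfolding reduced_def vertex_def by auto

lemma unit_eq: "one = sop X 1 0 (\<lambda>_. 0) vertex"
  unfolding unit_of_def vertex_def by simp

lemma sop_const: assumes "x \<in> simp X n" "a \<le> n" shows "sop X 1 n (\<lambda>_. a) x = one"
proof -
  have "sop X 1 n (\<lambda>_. a) x = sop X 1 n ((\<lambda>_. a) \<circ> (\<lambda>_::nat. 0::nat)) x"
    by (simp add: comp_def)
  also have "\<dots> = sop X 1 0 (\<lambda>_. 0) (sop X 0 n (\<lambda>_. a) x)"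
    using assms by (intro sop_comp[symmetric]) (auto simp: mono_map_def)
  also have "sop X 0 n (\<lambda>_. a) x = vertex"
    using sop_closed[of 0 n "\<lambda>_. a" x] assms simp_0 by (auto simp: mono_map_def)
  finally show ?thesis by (simp add: unit_eq)
qed

lemma arc_degenerate: "x \<in> simp X n \<Longrightarrow> a \<le> n \<Longrightarrow> arc X n a a x = one"
  unfolding arc_def using sop_const by simp

lemma eq_if_arcs_eq:
  assumes "x \<in> simp X n" "y \<in> simp X n" "n \<ge> 1"
    and "\<And>i. i < n \<Longrightarrow> arc X n i (Suc i) x = arc X n i (Suc i) y"
  shows "x = y"
proof -
  have "enum_op X n x = enum_op X n y" using assms by (simp add: enum_op_eq_arcs)
  thus ?thesis using N_simplicial assms unfolding N_simplicial_def inj_on_def by blast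
qed

lemma triangle_unit_left:
  assumes t: "t \<in> simp X 2" and unit: "arc X 2 0 1 t = one"
  shows "arc X 2 0 2 t = arc X 2 1 2 t"
proof -
  define e where "e = arc X 2 1 2 t"
  have e: "e \<in> simp X 1" unfolding e_def using t by (intro arc_closed) auto
  define \<theta> where "\<theta> = (\<lambda>j::nat. if j \<le> 1 then 0 else (1::nat))"
  have \<theta>: "mono_map 2 1 \<theta>" unfolding \<theta>_def mono_map_def by auto
  have arcs: "arc X 2 i j (sop X 2 1 \<theta> e) = arc X 1 (\<theta> i) (\<theta> j) e" if "i \<le> j" "j \<le> 2" for i j
    using arc_sop[OF \<theta> e that] .
  \<comment> \<open>t is the degeneracy of its edge 12 that repeats vertex 0\<close>
  have "sop X 2 1 \<theta> e = t"
  proof (rule eq_if_arcs_eq[OF sop_closed[OF \<theta> e] t])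
    fix i :: nat assume "i < 2"
    then consider "i = 0" | "i = 1" by linarith
    thus "arc X 2 i (Suc i) (sop X 2 1 \<theta> e) = arc X 2 i (Suc i) t"
    proof cases
      case 1 thus ?thesis using arcs[of 0 1] unit arc_degenerate[OF e, of 0] by (simp add: \<theta>_def)
    next
      case 2 thus ?thesis using arcs[of 1 2] arc_of_edge[OF e] by (simp add: \<theta>_def e_def numeral_2_eq_2)
    qed
  qed simp
  with arcs[of 0 2] arc_of_edge[OF e] show ?thesis
    unfolding e_def[symmetric] by (simp add: \<theta>_def)
qed

lemma triangle_unit_right:
  assumes t: "t \<in> simp X 2" and unit: "arc X 2 1 2 t = one"
  shows "arc X 2 0 2 t = arc X 2 0 1 t"
proof -
  define e where "e = arc X 2 0 1 t"
  have e: "e \<in> simp X 1" unfolding e_def using t by (intro arc_closed) auto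
  define \<theta> where "\<theta> = (\<lambda>j::nat. if j = 0 then 0 else (1::nat))"
  have \<theta>: "mono_map 2 1 \<theta>" unfolding \<theta>_def mono_map_def by auto
  have arcs: "arc X 2 i j (sop X 2 1 \<theta> e) = arc X 1 (\<theta> i) (\<theta> j) e" if "i \<le> j" "j \<le> 2" for i j
    using arc_sop[OF \<theta> e that] .
  have "sop X 2 1 \<theta> e = t"
  proof (rule eq_if_arcs_eq[OF sop_closed[OF \<theta> e] t])
    fix i :: nat assume "i < 2"
    then consider "i = 0" | "i = 1" by linarith
    thus "arc X 2 i (Suc i) (sop X 2 1 \<theta> e) = arc X 2 i (Suc i) t"
    proof cases
      case 1 thus ?thesis using arcs[of 0 1] arc_of_edge[OF e] by (simp add: \<theta>_def e_def)
    next
      case 2 thus ?thesis using arcs[of 1 2] unit arc_degenerate[OF e, of 1] by (simp add: \<theta>_def numeral_2_eq_2)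
    qed
  qed simp
  with arcs[of 0 2] arc_of_edge[OF e] show ?thesis
    unfolding e_def[symmetric] by (simp add: \<theta>_def)
qed

lemma triangle_closed:
  "x \<in> simp X n \<Longrightarrow> a \<le> b \<Longrightarrow> b \<le> c \<Longrightarrow> c \<le> n \<Longrightarrow> sop X 2 n (triangle a b c) x \<in> simp X 2"
  by (rule sop_closed[OF mono_map_triangle])

lemma arcs_triangle:
  assumes "x \<in> simp X n" "a \<le> b" "b \<le> c" "c \<le> n"
  shows "arc X 2 0 1 (sop X 2 n (triangle a b c) x) = arc X n a b x"
    and "arc X 2 1 2 (sop X 2 n (triangle a b c) x) = arc X n b c x"
    and "arc X 2 0 2 (sop X 2 n (triangle a b c) x) = arc X n a c x"
  using arc_sop[OF mono_map_triangle[OF assms(2-4)] assms(1)] by (auto simp: triangle_def)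

lemma arc_unit_left:
  assumes "x \<in> simp X n" "a \<le> b" "b \<le> c" "c \<le> n" "arc X n a b x = one"
  shows "arc X n a c x = arc X n b c x"
  using triangle_unit_left[OF triangle_closed[OF assms(1-4)]] arcs_triangle[OF assms(1-4)] assms(5)
  by simp

lemma arc_unit_right:
  assumes "x \<in> simp X n" "a \<le> b" "b \<le> c" "c \<le> n" "arc X n b c x = one"
  shows "arc X n a c x = arc X n a b x"
  using triangle_unit_right[OF triangle_closed[OF assms(1-4)]] arcs_triangle[OF assms(1-4)] assms(5)
  by simp

lemma triangle_eq_if_arcs_eq:
  assumes "t \<in> simp X 2" "t' \<in> simp X 2"
    and "arc X 2 0 1 t = arc X 2 0 1 t'" "arc X 2 1 2 t = arc X 2 1 2 t'"
  shows "t = t'"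
  by (rule eq_if_arcs_eq[OF assms(1,2)]) (use assms(3,4) in \<open>auto simp: less_Suc_eq numeral_2_eq_2\<close>)

end

text \<open>In partial-group notation: [x_1|\<dots>|x_m] extends to [u|x_1|\<dots>|x_m] with
  u x_1 \<dots> x_k = 1.\<close>

definition unit_extensions :: "'a sset \<Rightarrow> bool" where
  "unit_extensions X \<longleftrightarrow> (\<forall>m k x. x \<in> simp X m \<and> 1 \<le> k \<and> k \<le> m \<longrightarrow>
     (\<exists>y \<in> simp X (Suc m).
        (\<forall>i j. i \<le> j \<and> j \<le> m \<longrightarrow> arc X (Suc m) (Suc i) (Suc j) y = arc X m i j x) \<and>
        arc X (Suc m) 0 (Suc k) y = unit_of X))"

definition right_cancellative :: "'a sset \<Rightarrow> bool" where
  "right_cancellative X \<longleftrightarrow> (\<forall>t \<in> simp X 2. \<forall>t' \<in> simp X 2.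
     arc X 2 1 2 t = arc X 2 1 2 t' \<and> arc X 2 0 2 t = arc X 2 0 2 t' \<longrightarrow>
     arc X 2 0 1 t = arc X 2 0 1 t')"

lemma unit_extensionsD:
  assumes "unit_extensions X" "x \<in> simp X m" "1 \<le> k" "k \<le> m"
  shows "\<exists>y \<in> simp X (Suc m).
           (\<forall>i j. i \<le> j \<and> j \<le> m \<longrightarrow> arc X (Suc m) (Suc i) (Suc j) y = arc X m i j x) \<and>
           arc X (Suc m) 0 (Suc k) y = unit_of X"
  using assms unfolding unit_extensions_def by blast

lemma right_cancellativeD:
  "right_cancellative X \<Longrightarrow> t \<in> simp X 2 \<Longrightarrow> t' \<in> simp X 2 \<Longrightarrow>
   arc X 2 1 2 t = arc X 2 1 2 t' \<Longrightarrow> arc X 2 0 2 t = arc X 2 0 2 t' \<Longrightarrow>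
   arc X 2 0 1 t = arc X 2 0 1 t'"
  unfolding right_cancellative_def by blast

context reduced_N
begin

text \<open>y = [x_n^-1|\<dots>|x_1^-1|x_1|\<dots>|x_n]: the second half of y is x and every arc
  symmetric about the middle vertex is a unit.\<close>

definition mirror_extension :: "nat \<Rightarrow> 'a \<Rightarrow> 'a \<Rightarrow> bool" where
  "mirror_extension n x y \<longleftrightarrow> y \<in> simp X (2 * n) \<and>
     (\<forall>i j. i \<le> j \<and> j \<le> n \<longrightarrow> arc X (2 * n) (n + i) (n + j) y = arc X n i j x) \<and>
     (\<forall>k \<le> n. arc X (2 * n) (n - k) (n + k) y = one)"

lemma mirror_extensionD:
  assumes "mirror_extension n x y"
  shows "y \<in> simp X (2 * n)"
    and "i \<le> j \<Longrightarrow> j \<le> n \<Longrightarrow> arc X (2 * n) (n + i) (n + j) y = arc X n i j x"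
    and "k \<le> n \<Longrightarrow> arc X (2 * n) (n - k) (n + k) y = one"
  using assms unfolding mirror_extension_def by blast+

lemma unit_extensions_iterate:
  assumes ext: "unit_extensions X" and x: "x \<in> simp X n"
  shows "j \<le> n \<Longrightarrow> \<exists>y \<in> simp X (n + j).
    (\<forall>i i'. i \<le> i' \<and> i' \<le> n \<longrightarrow> arc X (n + j) (j + i) (j + i') y = arc X n i i' x) \<and>
    (\<forall>k \<le> j. arc X (n + j) (j - k) (j + k) y = one)"
proof (induction j)
  case 0
  show ?case using x arc_degenerate[OF x] by auto
next
  case (Suc j)
  then obtain y where y: "y \<in> simp X (n + j)"
    and shifted: "\<And>i i'. i \<le> i' \<Longrightarrow> i' \<le> n \<Longrightarrow> arc X (n + j) (j + i) (j + i') y = arc X n i i' x"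
    and mirror: "\<And>k. k \<le> j \<Longrightarrow> arc X (n + j) (j - k) (j + k) y = one" by auto
  obtain y' where y': "y' \<in> simp X (Suc (n + j))"
    and shifted': "\<And>i i'. i \<le> i' \<Longrightarrow> i' \<le> n + j \<Longrightarrow>
                  arc X (Suc (n + j)) (Suc i) (Suc i') y' = arc X (n + j) i i' y"
    and unit': "arc X (Suc (n + j)) 0 (Suc (Suc (2 * j))) y' = one"
    using unit_extensionsD[OF ext y, of "Suc (2 * j)"] Suc.prems by auto
  show ?case
  proof (intro bexI[of _ y'] conjI allI impI)
    fix i i' assume "i \<le> i' \<and> i' \<le> n"
    thus "arc X (n + Suc j) (Suc j + i) (Suc j + i') y' = arc X n i i' x"
      using shifted'[of "j + i" "j + i'"] shifted[of i i'] by simp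
  next
    fix k assume k: "k \<le> Suc j"
    show "arc X (n + Suc j) (Suc j - k) (Suc j + k) y' = one"
    proof (cases "k = Suc j")
      case True thus ?thesis using unit' by (simp add: mult_2)
    next
      case False
      hence "arc X (n + Suc j) (Suc j - k) (Suc j + k) y' = arc X (n + j) (j - k) (j + k) y"
        using k Suc.prems shifted'[of "j - k" "j + k"] by (simp add: Suc_diff_le)
      thus ?thesis using mirror k False by simp
    qed
  qed (use y' in simp)
qed

lemma mirror_extension_exists:
  "unit_extensions X \<Longrightarrow> x \<in> simp X n \<Longrightarrow> \<exists>y. mirror_extension n x y"
  using unit_extensions_iterate[of x n n] unfolding mirror_extension_def by (auto simp: mult_2)

lemma unit_extensions_if_mirror_extensions:
  assumes mirror: "\<And>n x. x \<in> simp X n \<Longrightarrow> \<exists>y. mirror_extension n x y"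
  shows "unit_extensions X"
  unfolding unit_extensions_def
proof (intro allI impI)
  fix m k x assume "x \<in> simp X m \<and> 1 \<le> k \<and> k \<le> m"
  hence x: "x \<in> simp X m" and k: "1 \<le> k" "k \<le> m" by auto
  obtain y where y: "mirror_extension m x y" using mirror[OF x] by blast
  have y2m: "y \<in> simp X (2 * m)" by (rule mirror_extensionD(1)[OF y])
  \<comment> \<open>keep the second half of y and, in front of it, the vertex m - k\<close>
  define \<theta> where "\<theta> = (\<lambda>j. if j = 0 then m - k else m + j - 1)"
  have \<theta>: "mono_map (Suc m) (2 * m) \<theta>" unfolding \<theta>_def mono_map_def using k by auto
  show "\<exists>z \<in> simp X (Suc m).
          (\<forall>i j. i \<le> j \<and> j \<le> m \<longrightarrow> arc X (Suc m) (Suc i) (Suc j) z = arc X m i j x) \<and>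
          arc X (Suc m) 0 (Suc k) z = one"
  proof (intro bexI[OF _ sop_closed[OF \<theta> y2m]] conjI allI impI)
    fix i j assume "i \<le> j \<and> j \<le> m"
    thus "arc X (Suc m) (Suc i) (Suc j) (sop X (Suc m) (2 * m) \<theta> y) = arc X m i j x"
      using arc_sop[OF \<theta> y2m, of "Suc i" "Suc j"] mirror_extensionD(2)[OF y, of i j]
      by (simp add: \<theta>_def)
  next
    show "arc X (Suc m) 0 (Suc k) (sop X (Suc m) (2 * m) \<theta> y) = one"
      using arc_sop[OF \<theta> y2m, of 0 "Suc k"] mirror_extensionD(3)[OF y, of k] k by (simp add: \<theta>_def)
  qed
qed

end

locale inversion_construction = reduced_N +
  assumes unit_extensions: "unit_extensions X"
    and right_cancellative: "right_cancellative X"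
begin

definition edge_inv :: "'a \<Rightarrow> 'a" where
  "edge_inv e = (SOME u. \<exists>t \<in> simp X 2. arc X 2 0 1 t = u \<and> arc X 2 1 2 t = e \<and> arc X 2 0 2 t = one)"

lemma edge_inv_triangle:
  assumes e: "e \<in> simp X 1"
  shows "\<exists>t \<in> simp X 2. arc X 2 0 1 t = edge_inv e \<and> arc X 2 1 2 t = e \<and> arc X 2 0 2 t = one"
proof -
  obtain y where "mirror_extension 1 e y"
    using mirror_extension_exists[OF unit_extensions e] by blast
  hence "y \<in> simp X 2" "arc X 2 1 2 y = e" "arc X 2 0 2 y = one"
    unfolding mirror_extension_def using arc_of_edge[OF e]
    by (auto dest: spec[of _ 0] spec[of _ 1] simp: numeral_2_eq_2)
  hence "\<exists>u. \<exists>t \<in> simp X 2. arc X 2 0 1 t = u \<and> arc X 2 1 2 t = e \<and> arc X 2 0 2 t = one"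
    by blast
  thus ?thesis unfolding edge_inv_def by (rule someI_ex)
qed

lemma edge_inv_unique:
  assumes t: "t \<in> simp X 2" and unit: "arc X 2 0 2 t = one"
  shows "arc X 2 0 1 t = edge_inv (arc X 2 1 2 t)"
proof -
  obtain t' where "t' \<in> simp X 2" "arc X 2 0 1 t' = edge_inv (arc X 2 1 2 t)"
      "arc X 2 1 2 t' = arc X 2 1 2 t" "arc X 2 0 2 t' = one"
    using edge_inv_triangle[OF arc_closed[OF _ _ t, of 1 2]] by auto
  thus ?thesis using right_cancellativeD[OF right_cancellative t] unit by simp
qed

lemma arc_eq_edge_inv:
  assumes x: "x \<in> simp X n" and le: "a \<le> b" "b \<le> c" "c \<le> d" "d \<le> n"
    and unit_bc: "arc X n b c x = one" and unit_ad: "arc X n a d x = one"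
  shows "arc X n a b x = edge_inv (arc X n c d x)"
proof -
  have "arc X n b d x = arc X n c d x" using arc_unit_left[OF x, of b c d] le unit_bc by simp
  thus ?thesis
    using edge_inv_unique[OF triangle_closed[OF x, of a b d]] arcs_triangle[OF x, of a b d] le unit_ad
    by simp
qed

lemma edge_inv_unit: "edge_inv one = one"
proof -
  have c: "mono_map 2 0 (\<lambda>_. 0)" by (simp add: mono_map_def)
  have "arc X 2 i j (sop X 2 0 (\<lambda>_. 0) vertex) = one" if "i \<le> j" "j \<le> 2" for i j
    using arc_sop[OF c _ that, of vertex] simp_0 arc_degenerate[of vertex 0 0] by simp
  thus ?thesis using edge_inv_unique[OF sop_closed[OF c]] simp_0 by simp
qed

lemma edge_inv_edge_inv:
  assumes e: "e \<in> simp X 1" shows "edge_inv (edge_inv e) = e"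
proof -
  obtain t where t: "t \<in> simp X 2" "arc X 2 0 1 t = edge_inv e" "arc X 2 1 2 t = e"
      "arc X 2 0 2 t = one"
    using edge_inv_triangle[OF e] by blast
  obtain y where "mirror_extension 2 t y" using mirror_extension_exists[OF unit_extensions t(1)] by blast
  hence y: "y \<in> simp X 4"
    and shifted: "\<And>i j. i \<le> j \<Longrightarrow> j \<le> 2 \<Longrightarrow> arc X 4 (2 + i) (2 + j) y = arc X 2 i j t"
    and unit_13: "arc X 4 1 3 y = one"
    unfolding mirror_extension_def by (auto dest: spec[of _ 1] simp: numeral_eq_Suc)
  have "arc X 4 1 4 y = arc X 4 3 4 y"
    using arc_unit_left[OF y, of 1 3 4] unit_13 by simp
  moreover have "arc X 4 1 4 y = arc X 4 1 2 y"
    using arc_unit_right[OF y, of 1 2 4] shifted[of 0 2] t(4) by (simp add: numeral_eq_Suc)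
  moreover have "arc X 4 1 2 y = edge_inv (arc X 4 2 3 y)"
    using arc_eq_edge_inv[OF y, of 1 2 2 3] unit_13 arc_degenerate[OF y, of 2] by simp
  ultimately show ?thesis using shifted[of 0 1] shifted[of 1 2] t(2,3) by (simp add: numeral_eq_Suc)
qed

definition simplex_inv :: "nat \<Rightarrow> 'a \<Rightarrow> 'a" where
  "simplex_inv n x = (if n = 0 then x else
     (THE u. u \<in> simp X n \<and> (\<forall>i < n. arc X n i (Suc i) u = edge_inv (arc X n (n - Suc i) (n - i) x))))"

lemma arc_front_mirror_extension:
  assumes y: "mirror_extension n x y" and i: "i < n"
  shows "arc X n i (Suc i) (sop X n (2 * n) (\<lambda>j. j) y) = edge_inv (arc X n (n - Suc i) (n - i) x)"
proof -
  have y2n: "y \<in> simp X (2 * n)" by (rule mirror_extensionD(1)[OF y])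
  have "arc X n i (Suc i) (sop X n (2 * n) (\<lambda>j. j) y) = arc X (2 * n) i (Suc i) y"
    using arc_sop[OF mono_map_front y2n, of i "Suc i"] i by simp
  also have "\<dots> = edge_inv (arc X (2 * n) (n + (n - Suc i)) (n + (n - i)) y)"
    using mirror_extensionD(3)[OF y, of "n - i"] mirror_extensionD(3)[OF y, of "n - Suc i"] i
    by (intro arc_eq_edge_inv[OF y2n]) auto
  also have "\<dots> = edge_inv (arc X n (n - Suc i) (n - i) x)"
    using mirror_extensionD(2)[OF y, of "n - Suc i" "n - i"] i by simp
  finally show ?thesis .
qed

lemma simplex_inv_eq_front:
  assumes y: "mirror_extension n x y" and n: "n \<ge> 1"
  shows "simplex_inv n x = sop X n (2 * n) (\<lambda>j. j) y"
proof -
  define u where "u = sop X n (2 * n) (\<lambda>j. j) y"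
  have u: "u \<in> simp X n"
    unfolding u_def by (rule sop_closed[OF mono_map_front mirror_extensionD(1)[OF y]])
  have arcs_u: "\<forall>i < n. arc X n i (Suc i) u = edge_inv (arc X n (n - Suc i) (n - i) x)"
    unfolding u_def using arc_front_mirror_extension[OF y] by blast
  have "(THE u. u \<in> simp X n \<and> (\<forall>i < n. arc X n i (Suc i) u = edge_inv (arc X n (n - Suc i) (n - i) x)))
        = u"
  proof (rule the_equality)
    fix w assume "w \<in> simp X n \<and> (\<forall>i < n. arc X n i (Suc i) w = edge_inv (arc X n (n - Suc i) (n - i) x))"
    thus "w = u" using arcs_u by (intro eq_if_arcs_eq[OF _ u n]) auto
  qed (use u arcs_u in blast)
  thus ?thesis unfolding simplex_inv_def u_def using n by simp
qed

lemma simplex_inv_closed: "x \<in> simp X n \<Longrightarrow> simplex_inv n x \<in> simp X n"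
  using mirror_extension_exists[OF unit_extensions, of x n] simplex_inv_eq_front[of n x]
  by (cases "n = 0") (auto simp: simplex_inv_def mirror_extension_def intro: sop_closed[OF mono_map_front])

lemma arc_simplex_inv:
  assumes x: "x \<in> simp X n" and le: "a \<le> b" "b \<le> n"
  shows "arc X n (n - b) (n - a) (simplex_inv n x) = edge_inv (arc X n a b x)"
proof (cases "n = 0")
  case True
  thus ?thesis using le arc_degenerate[OF x, of 0] edge_inv_unit by (simp add: simplex_inv_def)
next
  case False
  obtain y where y: "mirror_extension n x y" using mirror_extension_exists[OF unit_extensions x] by blast
  hence y2n: "y \<in> simp X (2 * n)" by (rule mirror_extensionD(1))
  have "arc X n (n - b) (n - a) (simplex_inv n x) = arc X (2 * n) (n - b) (n - a) y"
    using simplex_inv_eq_front[OF y] False arc_sop[OF mono_map_front y2n, of "n - b" "n - a"] le by simp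
  also have "\<dots> = edge_inv (arc X (2 * n) (n + a) (n + b) y)"
    using mirror_extensionD(3)[OF y, of a] mirror_extensionD(3)[OF y, of b] le
    by (intro arc_eq_edge_inv[OF y2n]) auto
  also have "\<dots> = edge_inv (arc X n a b x)" using mirror_extensionD(2)[OF y] le by simp
  finally show ?thesis .
qed

lemma simplex_inv_sop:
  assumes \<theta>: "mono_map m n \<theta>" and x: "x \<in> simp X n"
  shows "simplex_inv m (sop X m n \<theta> x) = sop X m n (\<lambda>j. n - \<theta> (m - j)) (simplex_inv n x)"
proof -
  have \<theta>_rev: "mono_map m n (\<lambda>j. n - \<theta> (m - j))"
    using \<theta> unfolding mono_map_def by (auto intro: diff_le_mono2)
  have lhs: "simplex_inv m (sop X m n \<theta> x) \<in> simp X m"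
    by (rule simplex_inv_closed[OF sop_closed[OF \<theta> x]])
  have rhs: "sop X m n (\<lambda>j. n - \<theta> (m - j)) (simplex_inv n x) \<in> simp X m"
    by (rule sop_closed[OF \<theta>_rev simplex_inv_closed[OF x]])
  show ?thesis
  proof (cases "m = 0")
    case True thus ?thesis using lhs rhs simp_0 by auto
  next
    case False
    show ?thesis
    proof (rule eq_if_arcs_eq[OF lhs rhs])
      fix i assume i: "i < m"
      have \<theta>_le: "\<theta> (m - Suc i) \<le> \<theta> (m - i)" "\<theta> (m - i) \<le> n"
        using \<theta> i unfolding mono_map_def by auto
      have "arc X m i (Suc i) (simplex_inv m (sop X m n \<theta> x))
          = edge_inv (arc X m (m - Suc i) (m - i) (sop X m n \<theta> x))"
        using arc_simplex_inv[OF sop_closed[OF \<theta> x], of "m - Suc i" "m - i"] i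
        by (simp add: Suc_diff_Suc)
      also have "\<dots> = edge_inv (arc X n (\<theta> (m - Suc i)) (\<theta> (m - i)) x)"
        using arc_sop[OF \<theta> x, of "m - Suc i" "m - i"] i by simp
      also have "\<dots> = arc X n (n - \<theta> (m - i)) (n - \<theta> (m - Suc i)) (simplex_inv n x)"
        by (rule arc_simplex_inv[OF x \<theta>_le, symmetric])
      also have "\<dots> = arc X m i (Suc i) (sop X m n (\<lambda>j. n - \<theta> (m - j)) (simplex_inv n x))"
        using arc_sop[OF \<theta>_rev simplex_inv_closed[OF x], of i "Suc i"] i by simp
      finally show "arc X m i (Suc i) (simplex_inv m (sop X m n \<theta> x))
          = arc X m i (Suc i) (sop X m n (\<lambda>j. n - \<theta> (m - j)) (simplex_inv n x))" .
    qed (use False in simp)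
  qed
qed

lemma simplex_inv_simplex_inv:
  assumes x: "x \<in> simp X n" shows "simplex_inv n (simplex_inv n x) = x"
proof (cases "n = 0")
  case True thus ?thesis by (simp add: simplex_inv_def)
next
  case False
  have inv_x: "simplex_inv n x \<in> simp X n" by (rule simplex_inv_closed[OF x])
  show ?thesis
  proof (rule eq_if_arcs_eq[OF simplex_inv_closed[OF inv_x] x])
    fix i assume i: "i < n"
    have "arc X n i (Suc i) (simplex_inv n (simplex_inv n x))
        = edge_inv (arc X n (n - Suc i) (n - i) (simplex_inv n x))"
      using arc_simplex_inv[OF inv_x, of "n - Suc i" "n - i"] i by (simp add: Suc_diff_Suc)
    also have "\<dots> = edge_inv (edge_inv (arc X n i (Suc i) x))"
      using arc_simplex_inv[OF x, of i "Suc i"] i by (simp add: Suc_diff_Suc)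
    also have "\<dots> = arc X n i (Suc i) x"
      using edge_inv_edge_inv arc_closed[OF _ _ x, of i "Suc i"] i by simp
    finally show "arc X n i (Suc i) (simplex_inv n (simplex_inv n x)) = arc X n i (Suc i) x" .
  qed (use False in simp)
qed

lemma simplex_inv_witness:
  assumes x: "x \<in> simp X n" and n: "n \<ge> 1"
  shows "\<exists>y \<in> simp X (2 * n). enum_op X (2 * n) y = enum_op X n (simplex_inv n x) @ enum_op X n x
                              \<and> prod_op X (2 * n) y = one"
proof -
  obtain y where y: "mirror_extension n x y" using mirror_extension_exists[OF unit_extensions x] by blast
  have y2n: "y \<in> simp X (2 * n)" by (rule mirror_extensionD(1)[OF y])
  have front: "arc X (2 * n) i (Suc i) y = arc X n i (Suc i) (simplex_inv n x)" if "i < n" for i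
    using simplex_inv_eq_front[OF y n] arc_sop[OF mono_map_front y2n, of i "Suc i"] that by simp
  have shifted: "arc X (2 * n) (n + i) (Suc (n + i)) y = arc X n i (Suc i) x" if "i < n" for i
    using mirror_extensionD(2)[OF y, of i "Suc i"] that by simp
  have "enum_op X (2 * n) y = enum_op X n (simplex_inv n x) @ enum_op X n x"
    unfolding enum_op_eq_arcs[OF y2n] enum_op_eq_arcs[OF x] enum_op_eq_arcs[OF simplex_inv_closed[OF x]]
  proof (rule nth_equalityI)
    fix i assume "i < length (map (\<lambda>i. arc X (2 * n) i (Suc i) y) [0..<2 * n])"
    thus "map (\<lambda>i. arc X (2 * n) i (Suc i) y) [0..<2 * n] ! i =
      (map (\<lambda>i. arc X n i (Suc i) (simplex_inv n x)) [0..<n] @ map (\<lambda>i. arc X n i (Suc i) x) [0..<n]) ! i"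
      using front shifted[of "i - n"] by (auto simp: nth_append)
  qed simp
  moreover have "prod_op X (2 * n) y = one"
    using mirror_extensionD(3)[OF y, of n] by (simp add: prod_op_eq_arc mult_2)
  ultimately show ?thesis using y2n by blast
qed

theorem inversion_simplex_inv: "inversion X simplex_inv"
  unfolding inversion_def smap_def opp_def
  using simplex_inv_closed simplex_inv_sop simplex_inv_simplex_inv simplex_inv_witness by auto

end

locale partial_group_with_inversion = reduced_N +
  fixes \<nu> :: "nat \<Rightarrow> 'a \<Rightarrow> 'a"
  assumes inversion: "inversion X \<nu>"
begin

lemma inv_closed: "x \<in> simp X n \<Longrightarrow> \<nu> n x \<in> simp X n"
  using inversion unfolding inversion_def smap_def opp_def by auto

lemma inv_inv: "x \<in> simp X n \<Longrightarrow> \<nu> n (\<nu> n x) = x"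
  using inversion unfolding inversion_def by auto

lemma inv_sop: "mono_map m n \<theta> \<Longrightarrow> x \<in> simp X n \<Longrightarrow>
    \<nu> m (sop X m n \<theta> x) = sop X m n (\<lambda>j. n - \<theta> (m - j)) (\<nu> n x)"
  using inversion unfolding inversion_def smap_def opp_def by auto

lemma arc_inv:
  assumes x: "x \<in> simp X n" and le: "a \<le> b" "b \<le> n"
  shows "arc X n (n - b) (n - a) (\<nu> n x) = \<nu> 1 (arc X n a b x)"
proof -
  have "\<nu> 1 (arc X n a b x) = sop X 1 n (\<lambda>j. n - (if 1 - j = 0 then a else b)) (\<nu> n x)"
    unfolding arc_def by (rule inv_sop[OF mono_map_arc[OF le] x])
  also have "\<dots> = arc X n (n - b) (n - a) (\<nu> n x)"
    unfolding arc_def using le by (intro sop_cong) (auto simp: mono_map_def inv_closed[OF x])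
  finally show ?thesis by simp
qed

definition inverse_witness :: "nat \<Rightarrow> 'a \<Rightarrow> 'a \<Rightarrow> bool" where
  "inverse_witness n x y \<longleftrightarrow> y \<in> simp X (2 * n) \<and>
     (\<forall>i j. i \<le> j \<and> j \<le> n \<longrightarrow> arc X (2 * n) i j y = arc X n i j (\<nu> n x)) \<and>
     (\<forall>i j. i \<le> j \<and> j \<le> n \<longrightarrow> arc X (2 * n) (n + i) (n + j) y = arc X n i j x) \<and>
     arc X (2 * n) 0 (2 * n) y = one"

lemma inverse_witnessD:
  assumes "inverse_witness n x y"
  shows "y \<in> simp X (2 * n)"
    and "i \<le> j \<Longrightarrow> j \<le> n \<Longrightarrow> arc X (2 * n) i j y = arc X n i j (\<nu> n x)"
    and "i \<le> j \<Longrightarrow> j \<le> n \<Longrightarrow> arc X (2 * n) (n + i) (n + j) y = arc X n i j x"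
    and "arc X (2 * n) 0 (2 * n) y = one"
  using assms unfolding inverse_witness_def by blast+

lemma inverse_witness_exists:
  assumes x: "x \<in> simp X n" and n: "n \<ge> 1"
  shows "\<exists>y. inverse_witness n x y"
proof -
  obtain y where y: "y \<in> simp X (2 * n)"
    and enum: "enum_op X (2 * n) y = enum_op X n (\<nu> n x) @ enum_op X n x"
    and prod: "prod_op X (2 * n) y = one"
    using inversion x n unfolding inversion_def by blast
  have inv_x: "\<nu> n x \<in> simp X n" by (rule inv_closed[OF x])
  have mono_back: "mono_map n (2 * n) (\<lambda>j. n + j)" by (auto simp: mono_map_def)
  have front_face: "sop X n (2 * n) (\<lambda>j. j) y = \<nu> n x"
  proof (rule eq_if_arcs_eq[OF sop_closed[OF mono_map_front y] inv_x n])
    fix i assume "i < n"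
    thus "arc X n i (Suc i) (sop X n (2 * n) (\<lambda>j. j) y) = arc X n i (Suc i) (\<nu> n x)"
      using arc_sop[OF mono_map_front y, of i "Suc i"] arg_cong[OF enum, of "\<lambda>l. l ! i"]
      by (simp add: enum_op_eq_arcs y inv_x x nth_append)
  qed
  have back_face: "sop X n (2 * n) (\<lambda>j. n + j) y = x"
  proof (rule eq_if_arcs_eq[OF sop_closed[OF mono_back y] x n])
    fix i assume "i < n"
    thus "arc X n i (Suc i) (sop X n (2 * n) (\<lambda>j. n + j) y) = arc X n i (Suc i) x"
      using arc_sop[OF mono_back y, of i "Suc i"] arg_cong[OF enum, of "\<lambda>l. l ! (n + i)"]
      by (simp add: enum_op_eq_arcs y inv_x x nth_append)
  qed
  have "inverse_witness n x y"
    unfolding inverse_witness_def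
    using y arc_sop[OF mono_map_front y] arc_sop[OF mono_back y] front_face back_face prod
    by (simp add: prod_op_eq_arc)
  thus ?thesis by blast
qed

lemma inverse_witness_middle:
  assumes x: "x \<in> simp X n" and y: "inverse_witness n x y" and k: "1 \<le> k" "k \<le> n"
    and y': "inverse_witness k (sop X k n (\<lambda>j. j) x) y'"
  shows "sop X (2 * k) (2 * n) (\<lambda>j. j + n - k) y = y'"
proof -
  have y2n: "y \<in> simp X (2 * n)" by (rule inverse_witnessD(1)[OF y])
  have mono_w: "mono_map k n (\<lambda>j. j)" using k by (auto simp: mono_map_def)
  define w where "w = sop X k n (\<lambda>j. j) x"
  have w: "w \<in> simp X k" unfolding w_def by (rule sop_closed[OF mono_w x])
  have arc_w: "arc X k i j w = arc X n i j x" if "i \<le> j" "j \<le> k" for i j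
    unfolding w_def using arc_sop[OF mono_w x that] by simp
  have mono_mid: "mono_map (2 * k) (2 * n) (\<lambda>j. j + n - k)" using k by (auto simp: mono_map_def)
  have arc_mid: "arc X (2 * k) i j (sop X (2 * k) (2 * n) (\<lambda>j. j + n - k) y)
      = arc X (2 * n) (i + n - k) (j + n - k) y" if "i \<le> j" "j \<le> 2 * k" for i j
    using arc_sop[OF mono_mid y2n that] by simp
  show ?thesis
  proof (rule eq_if_arcs_eq[OF sop_closed[OF mono_mid y2n] inverse_witnessD(1)[OF y']])
    fix i assume i: "i < 2 * k"
    show "arc X (2 * k) i (Suc i) (sop X (2 * k) (2 * n) (\<lambda>j. j + n - k) y) = arc X (2 * k) i (Suc i) y'"
    proof (cases "i < k")
      case True
      have "arc X (2 * k) i (Suc i) (sop X (2 * k) (2 * n) (\<lambda>j. j + n - k) y)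
          = arc X n (n - (k - i)) (n - (k - Suc i)) (\<nu> n x)"
        using arc_mid[of i "Suc i"] inverse_witnessD(2)[OF y, of "i + n - k" "Suc i + n - k"] True k
        by (simp add: add.commute)
      also have "\<dots> = \<nu> 1 (arc X k (k - Suc i) (k - i) w)"
        using arc_inv[OF x, of "k - Suc i" "k - i"] arc_w[of "k - Suc i" "k - i"] True k by simp
      also have "\<dots> = arc X k i (Suc i) (\<nu> k w)"
        using arc_inv[OF w, of "k - Suc i" "k - i"] True by (simp add: Suc_diff_Suc)
      also have "\<dots> = arc X (2 * k) i (Suc i) y'"
        using inverse_witnessD(2)[OF y', of i "Suc i"] True by (simp add: w_def)
      finally show ?thesis .
    next
      case False
      define l where "l = i - k"
      have il: "i = k + l" "l < k" using False i unfolding l_def by auto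
      have "arc X (2 * k) i (Suc i) (sop X (2 * k) (2 * n) (\<lambda>j. j + n - k) y)
          = arc X (2 * n) (n + l) (n + Suc l) y"
        using arc_mid[of i "Suc i"] i il by (simp add: add.commute)
      also have "\<dots> = arc X k l (Suc l) w"
        using inverse_witnessD(3)[OF y, of l "Suc l"] arc_w[of l "Suc l"] il k by simp
      also have "\<dots> = arc X (2 * k) i (Suc i) y'"
        using inverse_witnessD(3)[OF y', of l "Suc l"] il by (simp add: w_def)
      finally show ?thesis .
    qed
  qed (use k in simp)
qed

lemma arc_inverse_witness_symmetric:
  assumes x: "x \<in> simp X n" and y: "inverse_witness n x y" and k: "k \<le> n"
  shows "arc X (2 * n) (n - k) (n + k) y = one"
proof (cases "k = 0")
  case True thus ?thesis using arc_degenerate[OF inverse_witnessD(1)[OF y]] by simp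
next
  case False
  have mono_w: "mono_map k n (\<lambda>j. j)" using k by (auto simp: mono_map_def)
  have mono_mid: "mono_map (2 * k) (2 * n) (\<lambda>j. j + n - k)" using k by (auto simp: mono_map_def)
  obtain y' where y': "inverse_witness k (sop X k n (\<lambda>j. j) x) y'"
    using inverse_witness_exists[OF sop_closed[OF mono_w x]] False by auto
  \<comment> \<open>the part of y between the vertices n - k and n + k is an inverse witness, with product 1\<close>
  have "arc X (2 * n) (n - k) (n + k) y = arc X (2 * k) 0 (2 * k) y'"
    using inverse_witness_middle[OF x y _ k y'] arc_sop[OF mono_mid inverse_witnessD(1)[OF y], of 0 "2 * k"]
      False k by (simp add: add.commute)
  thus ?thesis using inverse_witnessD(4)[OF y'] by simp
qed

lemma mirror_extension_exists_inversion:
  assumes x: "x \<in> simp X n" shows "\<exists>y. mirror_extension n x y"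
proof (cases "n = 0")
  case True
  hence "mirror_extension n x x" using x arc_degenerate[OF x] unfolding mirror_extension_def by auto
  thus ?thesis by blast
next
  case False
  then obtain y where y: "inverse_witness n x y" using inverse_witness_exists[OF x] by auto
  hence "mirror_extension n x y"
    unfolding mirror_extension_def using inverse_witnessD(1,3)[OF y] arc_inverse_witness_symmetric[OF x y]
    by blast
  thus ?thesis by blast
qed

lemma unit_extensions: "unit_extensions X"
  by (rule unit_extensions_if_mirror_extensions[OF mirror_extension_exists_inversion])

lemma triangle_cancel_inverse:
  assumes t: "t \<in> simp X 2"
  shows "\<exists>s \<in> simp X 2. arc X 2 0 1 s = arc X 2 0 2 t \<and> arc X 2 1 2 s = \<nu> 1 (arc X 2 1 2 t)
           \<and> arc X 2 0 2 s = arc X 2 0 1 t"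
proof -
  have inv_t: "\<nu> 2 t \<in> simp X 2" by (rule inv_closed[OF t])
  obtain y where y: "inverse_witness 2 (\<nu> 2 t) y" using inverse_witness_exists[OF inv_t] by auto
  have y4: "y \<in> simp X 4" using inverse_witnessD(1)[OF y] by simp
  have front: "arc X 4 i j y = arc X 2 i j t" if "i \<le> j" "j \<le> 2" for i j
    using inverse_witnessD(2)[OF y that] inv_inv[OF t] by simp
  have arc_23: "arc X 4 2 3 y = \<nu> 1 (arc X 2 1 2 t)"
    using inverse_witnessD(3)[OF y, of 0 1] arc_inv[OF t, of 1 2] by simp
  have "arc X 4 1 3 y = one" using arc_inverse_witness_symmetric[OF inv_t y, of 1] by simp
  hence arc_03: "arc X 4 0 3 y = arc X 4 0 1 y" using arc_unit_right[OF y4, of 0 1 3] by simp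
  show ?thesis
    using triangle_closed[OF y4, of 0 2 3] arcs_triangle[OF y4, of 0 2 3] front[of 0 2] front[of 0 1]
      arc_23 arc_03 by auto
qed

lemma right_cancellative: "right_cancellative X"
  unfolding right_cancellative_def
  using triangle_cancel_inverse triangle_eq_if_arcs_eq by metis

end

lemma Delta_simp: "simp (Delta n) m = {xs. length xs = Suc m \<and> sorted xs \<and> (\<forall>x\<in>set xs. x \<le> n)}"
  by (simp add: Delta_def)

lemma Delta_sop: "sop (Delta n) m k \<theta> l = map (\<lambda>j. l ! \<theta> j) [0..<Suc m]"
  by (simp add: Delta_def)

lemma arc_Delta: "arc (Delta n) k i j l = [l ! i, l ! j]"
  by (simp add: arc_def Delta_sop upt_rec)

lemma pair_in_Delta: "a \<le> b \<Longrightarrow> b \<le> n \<Longrightarrow> [a, b] \<in> simp (Delta n) 1"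
  by (simp add: Delta_simp)

lemma upt_in_Delta: "[0..<Suc n] \<in> simp (Delta n) n"
  by (simp add: Delta_simp del: upt_Suc)

lemma mono_map_Delta: "l \<in> simp (Delta n) m \<Longrightarrow> mono_map m n (\<lambda>j. l ! j)"
  unfolding mono_map_def Delta_simp by (auto simp: sorted_iff_nth_mono less_Suc_eq_le)

lemma Delta_nth_le: "l \<in> simp (Delta n) m \<Longrightarrow> i \<le> j \<Longrightarrow> j \<le> m \<Longrightarrow> l ! i \<le> l ! j \<and> l ! j \<le> n"
  by (auto simp: Delta_simp sorted_iff_nth_mono)

lemma Delta_sop_closed:
  assumes \<theta>: "mono_map m k \<theta>" and l: "l \<in> simp (Delta n) k"
  shows "sop (Delta n) m k \<theta> l \<in> simp (Delta n) m"
proof -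
  have "sorted (map (\<lambda>j. l ! \<theta> j) [0..<Suc m])"
    using \<theta> l unfolding sorted_iff_nth_mono mono_map_def Delta_simp
    by (auto simp del: upt_Suc intro!: sorted_nth_mono simp: less_Suc_eq_le)
  moreover have "\<forall>x \<in> set (map (\<lambda>j. l ! \<theta> j) [0..<Suc m]). x \<le> n"
    using \<theta> l unfolding mono_map_def Delta_simp by (auto simp del: upt_Suc simp: less_Suc_eq_le)
  ultimately show ?thesis by (simp add: Delta_simp Delta_sop del: upt_Suc)
qed

locale reduced_fibre_bundle =
  X: simplicial X + B: reduced_N B + F: reduced_N F
  for X :: "'x sset" and B :: "'b sset" and F :: "'f sset" +
  fixes \<tau> :: "nat \<Rightarrow> 'x \<Rightarrow> 'b"
  assumes fibre_bundle: "fibre_bundle X B F \<tau>"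
begin

lemma proj_closed: "x \<in> simp X n \<Longrightarrow> \<tau> n x \<in> simp B n"
  using fibre_bundle unfolding fibre_bundle_def smap_def by blast

lemma proj_sop: "mono_map m n \<theta> \<Longrightarrow> x \<in> simp X n \<Longrightarrow> \<tau> m (sop X m n \<theta> x) = sop B m n \<theta> (\<tau> n x)"
  using fibre_bundle unfolding fibre_bundle_def smap_def by blast

lemma proj_onto: "\<tau> n ` simp X n = simp B n"
  using fibre_bundle unfolding fibre_bundle_def by blast

lemma proj_arc: "x \<in> simp X n \<Longrightarrow> a \<le> b \<Longrightarrow> b \<le> n \<Longrightarrow> \<tau> 1 (arc X n a b x) = arc B n a b (\<tau> n x)"
  unfolding arc_def by (rule proj_sop[OF mono_map_arc])

lemma char_map_closed: "b \<in> simp B n \<Longrightarrow> l \<in> simp (Delta n) m \<Longrightarrow> char_map B n b m l \<in> simp B m"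
  unfolding char_map_def by (rule B.sop_closed[OF mono_map_Delta])

lemma arc_char_map:
  assumes "b \<in> simp B n" "l \<in> simp (Delta n) m" "i \<le> j" "j \<le> m"
  shows "arc B m i j (char_map B n b m l) = arc B n (l ! i) (l ! j) b"
  unfolding char_map_def using B.arc_sop[OF mono_map_Delta assms(1,3,4)] assms(2) .

lemma char_map_upt: assumes b: "b \<in> simp B n" shows "char_map B n b n [0..<Suc n] = b"
proof -
  have "char_map B n b n [0..<Suc n] = sop B n n (\<lambda>j. j) b"
    unfolding char_map_def
    by (rule B.sop_cong[OF mono_map_Delta[OF upt_in_Delta] _ b])
      (simp del: upt_Suc add: less_Suc_eq_le)
  thus ?thesis using B.sop_id[OF b] by simp
qed

text \<open>\<psi> m f l is the X-component of the image of (f, l) under an isomorphism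
  F \<times> Delta[n] \<cong> X^b over Delta[n]; its Delta[n]-component is l itself.\<close>

definition trivialization :: "nat \<Rightarrow> 'b \<Rightarrow> (nat \<Rightarrow> 'f \<Rightarrow> nat list \<Rightarrow> 'x) \<Rightarrow> bool" where
  "trivialization n b \<psi> \<longleftrightarrow>
     (\<forall>m f l. f \<in> simp F m \<and> l \<in> simp (Delta n) m \<longrightarrow>
        \<psi> m f l \<in> simp X m \<and> \<tau> m (\<psi> m f l) = char_map B n b m l) \<and>
     (\<forall>m k \<theta> f l. mono_map m k \<theta> \<and> f \<in> simp F k \<and> l \<in> simp (Delta n) k \<longrightarrow>
        \<psi> m (sop F m k \<theta> f) (sop (Delta n) m k \<theta> l) = sop X m k \<theta> (\<psi> k f l)) \<and>
     (\<forall>m x l. x \<in> simp X m \<and> l \<in> simp (Delta n) m \<and> char_map B n b m l = \<tau> m x \<longrightarrow>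
        (\<exists>f \<in> simp F m. \<psi> m f l = x)) \<and>
     (\<forall>m f f' l. f \<in> simp F m \<and> f' \<in> simp F m \<and> l \<in> simp (Delta n) m \<and> \<psi> m f l = \<psi> m f' l \<longrightarrow>
        f = f')"

lemma trivialization_exists:
  assumes b: "b \<in> simp B n" shows "\<exists>\<psi>. trivialization n b \<psi>"
proof -
  obtain \<phi> where iso: "siso (prod_sset F (Delta n)) (fibre_over X B \<tau> n b) \<phi>"
    and fst_\<phi>: "\<forall>m p. p \<in> simp (prod_sset F (Delta n)) m \<longrightarrow> fst (\<phi> m p) = snd p"
    using fibre_bundle b unfolding fibre_bundle_def by blast
  have simp_prod: "simp (prod_sset F (Delta n)) m = simp F m \<times> simp (Delta n) m" for m
    by (simp add: prod_sset_def)
  have simp_fibre: "simp (fibre_over X B \<tau> n b) m =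
      {(l, x). l \<in> simp (Delta n) m \<and> x \<in> simp X m \<and> char_map B n b m l = \<tau> m x}" for m
    by (simp add: fibre_over_def pullback_sset_def)
  have bij: "bij_betw (\<phi> m) (simp F m \<times> simp (Delta n) m) (simp (fibre_over X B \<tau> n b) m)" for m
    using iso unfolding siso_def simp_prod by blast
  have \<phi>_sop: "\<phi> m (sop (prod_sset F (Delta n)) m k \<theta> p) = sop (fibre_over X B \<tau> n b) m k \<theta> (\<phi> k p)"
    if "mono_map m k \<theta>" "p \<in> simp F k \<times> simp (Delta n) k" for m k \<theta> p
    using iso that unfolding siso_def smap_def simp_prod by blast
  define \<psi> where "\<psi> m f l = snd (\<phi> m (f, l))" for m f l
  have \<phi>_eq: "\<phi> m (f, l) = (l, \<psi> m f l)" if "f \<in> simp F m" "l \<in> simp (Delta n) m" for m f l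
    using fst_\<phi> that simp_prod unfolding \<psi>_def by (metis prod.collapse mem_Sigma_iff snd_conv)
  have "trivialization n b \<psi>" unfolding trivialization_def
  proof (intro conjI allI impI)
    fix m f l assume a: "f \<in> simp F m \<and> l \<in> simp (Delta n) m"
    hence "\<phi> m (f, l) \<in> simp (fibre_over X B \<tau> n b) m" using bij_betwE[OF bij] by blast
    thus "\<psi> m f l \<in> simp X m" "\<tau> m (\<psi> m f l) = char_map B n b m l" using \<phi>_eq a simp_fibre by auto
  next
    fix m k \<theta> f l assume a: "mono_map m k \<theta> \<and> f \<in> simp F k \<and> l \<in> simp (Delta n) k"
    have "\<phi> m (sop F m k \<theta> f, sop (Delta n) m k \<theta> l) = sop (fibre_over X B \<tau> n b) m k \<theta> (l, \<psi> k f l)"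
      using \<phi>_sop[of m k \<theta> "(f, l)"] a \<phi>_eq[of f k l] by (simp add: prod_sset_def)
    thus "\<psi> m (sop F m k \<theta> f) (sop (Delta n) m k \<theta> l) = sop X m k \<theta> (\<psi> k f l)"
      using \<phi>_eq a F.sop_closed Delta_sop_closed by (simp add: fibre_over_def pullback_sset_def)
  next
    fix m x l assume "x \<in> simp X m \<and> l \<in> simp (Delta n) m \<and> char_map B n b m l = \<tau> m x"
    hence "(l, x) \<in> \<phi> m ` (simp F m \<times> simp (Delta n) m)"
      using simp_fibre bij unfolding bij_betw_def by auto
    then obtain f l' where "f \<in> simp F m" "l' \<in> simp (Delta n) m" "\<phi> m (f, l') = (l, x)" by auto
    thus "\<exists>f \<in> simp F m. \<psi> m f l = x" using \<phi>_eq by auto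
  next
    fix m f f' l assume a: "f \<in> simp F m \<and> f' \<in> simp F m \<and> l \<in> simp (Delta n) m \<and> \<psi> m f l = \<psi> m f' l"
    hence "\<phi> m (f, l) = \<phi> m (f', l)" using \<phi>_eq by simp
    thus "f = f'" using bij a unfolding bij_betw_def inj_on_def by blast
  qed
  thus ?thesis by blast
qed

lemma triv_closed:
  "trivialization n b \<psi> \<Longrightarrow> f \<in> simp F m \<Longrightarrow> l \<in> simp (Delta n) m \<Longrightarrow> \<psi> m f l \<in> simp X m"
  unfolding trivialization_def by blast

lemma triv_proj:
  "trivialization n b \<psi> \<Longrightarrow> f \<in> simp F m \<Longrightarrow> l \<in> simp (Delta n) m \<Longrightarrow>
   \<tau> m (\<psi> m f l) = char_map B n b m l"
  unfolding trivialization_def by blast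

lemma triv_sop:
  "trivialization n b \<psi> \<Longrightarrow> mono_map m k \<theta> \<Longrightarrow> f \<in> simp F k \<Longrightarrow> l \<in> simp (Delta n) k \<Longrightarrow>
   \<psi> m (sop F m k \<theta> f) (sop (Delta n) m k \<theta> l) = sop X m k \<theta> (\<psi> k f l)"
  unfolding trivialization_def by blast

lemma triv_lift:
  "trivialization n b \<psi> \<Longrightarrow> x \<in> simp X m \<Longrightarrow> l \<in> simp (Delta n) m \<Longrightarrow>
   char_map B n b m l = \<tau> m x \<Longrightarrow> \<exists>f \<in> simp F m. \<psi> m f l = x"
  unfolding trivialization_def by blast

lemma triv_inj:
  "trivialization n b \<psi> \<Longrightarrow> f \<in> simp F m \<Longrightarrow> f' \<in> simp F m \<Longrightarrow> l \<in> simp (Delta n) m \<Longrightarrow>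
   \<psi> m f l = \<psi> m f' l \<Longrightarrow> f = f'"
  unfolding trivialization_def by blast

lemma triv_arc:
  assumes "trivialization n b \<psi>" "f \<in> simp F k" "l \<in> simp (Delta n) k" "i \<le> j" "j \<le> k"
  shows "\<psi> 1 (arc F k i j f) [l ! i, l ! j] = arc X k i j (\<psi> k f l)"
  using triv_sop[OF assms(1) mono_map_arc[OF assms(4,5)] assms(2,3)]
  unfolding arc_def arc_Delta[unfolded arc_def] by simp

lemma triv_arc_eq:
  assumes \<psi>: "trivialization n b \<psi>"
    and f: "f \<in> simp F k" and l: "l \<in> simp (Delta n) k" and ij: "i \<le> j" "j \<le> k"
    and f': "f' \<in> simp F k'" and l': "l' \<in> simp (Delta n) k'" and ij': "i' \<le> j'" "j' \<le> k'"
    and same_vertices: "l ! i = l' ! i'" "l ! j = l' ! j'"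
    and same_arcs: "arc X k i j (\<psi> k f l) = arc X k' i' j' (\<psi> k' f' l')"
  shows "arc F k i j f = arc F k' i' j' f'"
proof (rule triv_inj[OF \<psi> F.arc_closed[OF ij f] F.arc_closed[OF ij' f']])
  show "[l ! i, l ! j] \<in> simp (Delta n) 1" using pair_in_Delta Delta_nth_le[OF l ij] by blast
  show "\<psi> 1 (arc F k i j f) [l ! i, l ! j] = \<psi> 1 (arc F k' i' j' f') [l ! i, l ! j]"
    using triv_arc[OF \<psi> f l ij] triv_arc[OF \<psi> f' l' ij'] same_vertices same_arcs by simp
qed

lemma triv_lift_upt:
  assumes \<psi>: "trivialization n (\<tau> n x) \<psi>" and x: "x \<in> simp X n"
  shows "\<exists>f \<in> simp F n. \<psi> n f [0..<Suc n] = x"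
  using triv_lift[OF \<psi> x upt_in_Delta] char_map_upt[OF proj_closed[OF x]] by simp

lemma reduced_total: "reduced X"
proof -
  obtain x0 where x0: "x0 \<in> simp X 0" using proj_onto[of 0] B.simp_0 by auto
  obtain \<psi> where \<psi>: "trivialization 0 (\<tau> 0 x0) \<psi>"
    using trivialization_exists[OF proj_closed[OF x0]] by blast
  have "x = x0" if x: "x \<in> simp X 0" for x
  proof -
    have "\<tau> 0 x = \<tau> 0 x0" using proj_closed[OF x] proj_closed[OF x0] B.simp_0 by auto
    then obtain f where "f \<in> simp F 0" "\<psi> 0 f [0..<Suc 0] = x"
      using triv_lift_upt[of 0 x] \<psi> x by auto
    moreover obtain f0 where "f0 \<in> simp F 0" "\<psi> 0 f0 [0..<Suc 0] = x0"
      using triv_lift_upt[OF \<psi> x0] by blast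
    ultimately show ?thesis using F.simp_0 by auto
  qed
  thus ?thesis unfolding reduced_def using x0 by blast
qed

lemma N_simplicial_total: "N_simplicial X"
  unfolding N_simplicial_def
proof (intro allI impI inj_onI)
  fix n x x' assume n: "1 \<le> n" and x: "x \<in> simp X n" and x': "x' \<in> simp X n"
    and enum: "enum_op X n x = enum_op X n x'"
  have arcs: "arc X n i (Suc i) x = arc X n i (Suc i) x'" if "i < n" for i
    using arg_cong[OF enum, of "\<lambda>l. l ! i"] that by (simp add: X.enum_op_eq_arcs x x')
  have "\<tau> n x = \<tau> n x'"
  proof (rule B.eq_if_arcs_eq[OF proj_closed[OF x] proj_closed[OF x'] n])
    fix i assume "i < n"
    thus "arc B n i (Suc i) (\<tau> n x) = arc B n i (Suc i) (\<tau> n x')"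
      using proj_arc[OF x, of i "Suc i"] proj_arc[OF x', of i "Suc i"] arcs by simp
  qed
  obtain \<psi> where \<psi>: "trivialization n (\<tau> n x) \<psi>"
    using trivialization_exists[OF proj_closed[OF x]] by blast
  obtain f where f: "f \<in> simp F n" "\<psi> n f [0..<Suc n] = x" using triv_lift_upt[OF \<psi> x] by blast
  obtain f' where f': "f' \<in> simp F n" "\<psi> n f' [0..<Suc n] = x'"
    using triv_lift_upt[of n x'] \<psi> x' \<open>\<tau> n x = \<tau> n x'\<close> by auto
  have "f = f'"
  proof (rule F.eq_if_arcs_eq[OF f(1) f'(1) n])
    fix i assume "i < n"
    thus "arc F n i (Suc i) f = arc F n i (Suc i) f'"
      by (intro triv_arc_eq[OF \<psi> f(1) upt_in_Delta _ _ f'(1) upt_in_Delta])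
        (use arcs f f' in \<open>auto simp del: upt_Suc\<close>)
  qed
  thus "x = x'" using f f' by simp
qed

end

sublocale reduced_fibre_bundle \<subseteq> X: reduced_N X
  by unfold_locales (rule reduced_total, rule N_simplicial_total)

context reduced_fibre_bundle
begin

text \<open>Transport G to the vertex k + 1 of c and put a degenerate vertex in front: the resulting
  simplex of X lies over the simplex (0, k + 1, \<dots>, k + 1) of Delta[m + 1], all of whose edges
  are units in B, so it lifts along the trivialization.\<close>

lemma lift_with_unit_edge:
  assumes \<psi>: "trivialization (Suc m) c \<psi>" and c: "c \<in> simp B (Suc m)"
    and unit: "arc B (Suc m) 0 (Suc k) c = B.one" and k: "k \<le> m" and G: "G \<in> simp F (Suc m)"
  shows "\<exists>\<kappa> \<in> simp F (Suc (Suc m)).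
    (\<forall>i j. i \<le> j \<and> j \<le> Suc m \<longrightarrow> arc F (Suc (Suc m)) (Suc i) (Suc j) \<kappa> = arc F (Suc m) i j G) \<and>
    \<psi> 1 (arc F (Suc (Suc m)) 0 1 \<kappa>) [0, Suc k] = X.one"
proof -
  define rep where "rep = replicate (Suc (Suc m)) (Suc k)"
  have rep: "rep \<in> simp (Delta (Suc m)) (Suc m)" unfolding rep_def Delta_simp using k by auto
  have rep_nth: "rep ! i = Suc k" if "i \<le> Suc m" for i
    using that unfolding rep_def by (simp del: replicate_Suc)
  define w where "w = \<psi> (Suc m) G rep"
  have w: "w \<in> simp X (Suc m)" unfolding w_def by (rule triv_closed[OF \<psi> G rep])
  have shift: "mono_map (Suc (Suc m)) (Suc m) (\<lambda>j. j - 1)" by (auto simp: mono_map_def)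
  define W where "W = sop X (Suc (Suc m)) (Suc m) (\<lambda>j. j - 1) w"
  have W: "W \<in> simp X (Suc (Suc m))" unfolding W_def by (rule X.sop_closed[OF shift w])
  have arc_W: "arc X (Suc (Suc m)) i j W = arc X (Suc m) (i - 1) (j - 1) w"
    if "i \<le> j" "j \<le> Suc (Suc m)" for i j
    unfolding W_def using X.arc_sop[OF shift w that] .
  define pat where "pat = 0 # rep"
  have pat: "pat \<in> simp (Delta (Suc m)) (Suc (Suc m))" using rep unfolding pat_def Delta_simp by auto
  have pat_nth: "pat ! Suc i = Suc k" if "i \<le> Suc m" for i using rep_nth that unfolding pat_def by simp
  have arc_c: "arc B (Suc m) (pat ! i) (pat ! Suc i) c = B.one" if "i < Suc (Suc m)" for i
    using that unit pat_nth[of 0] pat_nth[of i] pat_nth[of "i - 1"] B.arc_degenerate[OF c, of "Suc k"] k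
    by (cases i) (auto simp: pat_def)
  have "char_map B (Suc m) c (Suc (Suc m)) pat = \<tau> (Suc (Suc m)) W"
  proof (rule B.eq_if_arcs_eq[OF char_map_closed[OF c pat] proj_closed[OF W]])
    fix i assume i: "i < Suc (Suc m)"
    have "arc B (Suc (Suc m)) i (Suc i) (\<tau> (Suc (Suc m)) W) = \<tau> 1 (arc X (Suc m) (i - 1) i w)"
      using proj_arc[OF W, of i "Suc i"] arc_W[of i "Suc i"] i by simp
    also have "\<dots> = arc B (Suc m) (rep ! (i - 1)) (rep ! i) c"
      using proj_arc[OF w, of "i - 1" i] triv_proj[OF \<psi> G rep] arc_char_map[OF c rep, of "i - 1" i] i
      by (simp add: w_def)
    also have "\<dots> = B.one" using rep_nth i B.arc_degenerate[OF c, of "Suc k"] k by simp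
    finally show "arc B (Suc (Suc m)) i (Suc i) (char_map B (Suc m) c (Suc (Suc m)) pat) =
        arc B (Suc (Suc m)) i (Suc i) (\<tau> (Suc (Suc m)) W)"
      using arc_char_map[OF c pat, of i "Suc i"] arc_c[OF i] i by simp
  qed simp
  then obtain \<kappa> where \<kappa>: "\<kappa> \<in> simp F (Suc (Suc m))" "\<psi> (Suc (Suc m)) \<kappa> pat = W"
    using triv_lift[OF \<psi> W pat] by blast
  show ?thesis
  proof (intro bexI[OF _ \<kappa>(1)] conjI allI impI)
    fix i j assume "i \<le> j \<and> j \<le> Suc m"
    thus "arc F (Suc (Suc m)) (Suc i) (Suc j) \<kappa> = arc F (Suc m) i j G"
      by (intro triv_arc_eq[OF \<psi> \<kappa>(1) pat _ _ G rep]) (use pat_nth rep_nth arc_W \<kappa>(2) w_def in auto)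
  next
    show "\<psi> 1 (arc F (Suc (Suc m)) 0 1 \<kappa>) [0, Suc k] = X.one"
      using triv_arc[OF \<psi> \<kappa>(1) pat, of 0 1] \<kappa>(2) arc_W[of 0 1] X.arc_degenerate[OF w, of 0]
        pat_nth[of 0] by (simp add: pat_def)
  qed
qed

lemma lift_unit_extension:
  assumes \<psi>: "trivialization (Suc m) c \<psi>" and c: "c \<in> simp B (Suc m)"
    and unit: "arc B (Suc m) 0 (Suc k) c = B.one" and k: "1 \<le> k" "k \<le> m"
    and F_ext: "unit_extensions F" and f: "f \<in> simp F m"
  shows "\<exists>g \<in> simp F (Suc m).
    (\<forall>i j. i \<le> j \<and> j \<le> m \<longrightarrow> arc F (Suc m) (Suc i) (Suc j) g = arc F m i j f) \<and>
    \<psi> 1 (arc F (Suc m) 0 (Suc k) g) [0, Suc k] = X.one"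
proof -
  obtain G where G: "G \<in> simp F (Suc m)"
    and arc_G: "\<And>i j. i \<le> j \<Longrightarrow> j \<le> m \<Longrightarrow> arc F (Suc m) (Suc i) (Suc j) G = arc F m i j f"
    and unit_G: "arc F (Suc m) 0 (Suc k) G = F.one"
    using unit_extensionsD[OF F_ext f k] by blast
  obtain \<kappa> where \<kappa>: "\<kappa> \<in> simp F (Suc (Suc m))"
    and arc_\<kappa>: "\<And>i j. i \<le> j \<Longrightarrow> j \<le> Suc m \<Longrightarrow>
                    arc F (Suc (Suc m)) (Suc i) (Suc j) \<kappa> = arc F (Suc m) i j G"
    and arc_\<kappa>_01: "\<psi> 1 (arc F (Suc (Suc m)) 0 1 \<kappa>) [0, Suc k] = X.one"
    using lift_with_unit_edge[OF \<psi> c unit k(2) G] by blast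
  define \<theta> where "\<theta> = (\<lambda>j::nat. if j = 0 then 0 else Suc j)"
  have \<theta>: "mono_map (Suc m) (Suc (Suc m)) \<theta>" unfolding \<theta>_def mono_map_def by auto
  define g where "g = sop F (Suc m) (Suc (Suc m)) \<theta> \<kappa>"
  have arc_g: "arc F (Suc m) i j g = arc F (Suc (Suc m)) (\<theta> i) (\<theta> j) \<kappa>"
    if "i \<le> j" "j \<le> Suc m" for i j
    unfolding g_def using F.arc_sop[OF \<theta> \<kappa> that] .
  have "arc F (Suc (Suc m)) 1 (Suc (Suc k)) \<kappa> = F.one" using arc_\<kappa>[of 0 "Suc k"] unit_G k by simp
  hence "arc F (Suc (Suc m)) 0 (Suc (Suc k)) \<kappa> = arc F (Suc (Suc m)) 0 1 \<kappa>"
    using F.arc_unit_right[OF \<kappa>, of 0 1 "Suc (Suc k)"] k by simp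
  hence "arc F (Suc m) 0 (Suc k) g = arc F (Suc (Suc m)) 0 1 \<kappa>"
    using arc_g[of 0 "Suc k"] k by (simp add: \<theta>_def)
  moreover have "arc F (Suc m) (Suc i) (Suc j) g = arc F m i j f" if "i \<le> j" "j \<le> m" for i j
    using arc_g[of "Suc i" "Suc j"] arc_\<kappa>[of "Suc i" "Suc j"] arc_G[of i j] that by (simp add: \<theta>_def)
  moreover have "g \<in> simp F (Suc m)" unfolding g_def by (rule F.sop_closed[OF \<theta> \<kappa>])
  ultimately show ?thesis using arc_\<kappa>_01 by (intro bexI[of _ g]) simp_all
qed

lemma unit_extensions_total:
  assumes B_ext: "unit_extensions B" and F_ext: "unit_extensions F"
  shows "unit_extensions X"
  unfolding unit_extensions_def
proof (intro allI impI)
  fix m k x assume "x \<in> simp X m \<and> 1 \<le> k \<and> k \<le> m"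
  hence x: "x \<in> simp X m" and k: "1 \<le> k" "k \<le> m" by auto
  obtain c where c: "c \<in> simp B (Suc m)"
    and arc_c: "\<And>i j. i \<le> j \<Longrightarrow> j \<le> m \<Longrightarrow> arc B (Suc m) (Suc i) (Suc j) c = arc B m i j (\<tau> m x)"
    and unit: "arc B (Suc m) 0 (Suc k) c = B.one"
    using unit_extensionsD[OF B_ext proj_closed[OF x] k] by blast
  obtain \<psi> where \<psi>: "trivialization (Suc m) c \<psi>" using trivialization_exists[OF c] by blast
  define d0 where "d0 = map Suc [0..<Suc m]"
  have d0: "d0 \<in> simp (Delta (Suc m)) m"
    unfolding d0_def Delta_simp by (auto simp del: upt_Suc simp: sorted_map)
  have d0_nth: "d0 ! i = Suc i" if "i \<le> m" for i
    using that unfolding d0_def by (simp del: upt_Suc add: less_Suc_eq_le)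
  have "char_map B (Suc m) c m d0 = \<tau> m x"
  proof (rule B.eq_if_arcs_eq[OF char_map_closed[OF c d0] proj_closed[OF x]])
    fix i assume "i < m"
    thus "arc B m i (Suc i) (char_map B (Suc m) c m d0) = arc B m i (Suc i) (\<tau> m x)"
      using arc_char_map[OF c d0, of i "Suc i"] d0_nth[of i] d0_nth[of "Suc i"] arc_c[of i "Suc i"]
      by simp
  qed (use k in simp)
  then obtain f where f: "f \<in> simp F m" "\<psi> m f d0 = x" using triv_lift[OF \<psi> x d0] by blast
  obtain g where g: "g \<in> simp F (Suc m)"
    and arc_g: "\<And>i j. i \<le> j \<Longrightarrow> j \<le> m \<Longrightarrow> arc F (Suc m) (Suc i) (Suc j) g = arc F m i j f"
    and unit_g: "\<psi> 1 (arc F (Suc m) 0 (Suc k) g) [0, Suc k] = X.one"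
    using lift_unit_extension[OF \<psi> c unit k F_ext f(1)] by blast
  have upt_nth: "[0..<Suc (Suc m)] ! i = i" if "i \<le> Suc m" for i
    using that by (simp del: upt_Suc add: less_Suc_eq_le)
  define y where "y = \<psi> (Suc m) g [0..<Suc (Suc m)]"
  have arc_y: "arc X (Suc m) i j y = \<psi> 1 (arc F (Suc m) i j g) [i, j]" if "i \<le> j" "j \<le> Suc m" for i j
    unfolding y_def using triv_arc[OF \<psi> g upt_in_Delta that] upt_nth that by simp
  show "\<exists>y \<in> simp X (Suc m).
          (\<forall>i j. i \<le> j \<and> j \<le> m \<longrightarrow> arc X (Suc m) (Suc i) (Suc j) y = arc X m i j x) \<and>
          arc X (Suc m) 0 (Suc k) y = X.one"
  proof (intro bexI[of _ y] conjI allI impI)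
    fix i j assume ij: "i \<le> j \<and> j \<le> m"
    thus "arc X (Suc m) (Suc i) (Suc j) y = arc X m i j x"
      using arc_y[of "Suc i" "Suc j"] arc_g[of i j] triv_arc[OF \<psi> f(1) d0, of i j] d0_nth f(2) by simp
  next
    show "arc X (Suc m) 0 (Suc k) y = X.one" using arc_y[of 0 "Suc k"] unit_g k by simp
  qed (unfold y_def, rule triv_closed[OF \<psi> g upt_in_Delta])
qed

lemma right_cancellative_total:
  assumes B_canc: "right_cancellative B" and F_canc: "right_cancellative F"
  shows "right_cancellative X"
  unfolding right_cancellative_def
proof (intro ballI impI)
  fix t t' assume t: "t \<in> simp X 2" and t': "t' \<in> simp X 2"
    and arcs: "arc X 2 1 2 t = arc X 2 1 2 t' \<and> arc X 2 0 2 t = arc X 2 0 2 t'"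
  have "arc B 2 0 1 (\<tau> 2 t) = arc B 2 0 1 (\<tau> 2 t')"
    using right_cancellativeD[OF B_canc proj_closed[OF t] proj_closed[OF t']]
      proj_arc[OF t, of 1 2] proj_arc[OF t', of 1 2] proj_arc[OF t, of 0 2] proj_arc[OF t', of 0 2] arcs
    by auto
  hence same_proj: "\<tau> 2 t = \<tau> 2 t'"
    using B.triangle_eq_if_arcs_eq[OF proj_closed[OF t] proj_closed[OF t']]
      proj_arc[OF t, of 1 2] proj_arc[OF t', of 1 2] arcs by auto
  obtain \<psi> where \<psi>: "trivialization 2 (\<tau> 2 t) \<psi>" using trivialization_exists[OF proj_closed[OF t]] by blast
  obtain g where g: "g \<in> simp F 2" "\<psi> 2 g [0..<Suc 2] = t" using triv_lift_upt[OF \<psi> t] by blast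
  obtain g' where g': "g' \<in> simp F 2" "\<psi> 2 g' [0..<Suc 2] = t'"
    using triv_lift_upt[of 2 t'] \<psi> t' same_proj by auto
  have "arc F 2 1 2 g = arc F 2 1 2 g'" "arc F 2 0 2 g = arc F 2 0 2 g'"
    by (rule triv_arc_eq[OF \<psi> g(1) upt_in_Delta _ _ g'(1) upt_in_Delta]; use arcs g g' in simp)+
  hence "arc F 2 0 1 g = arc F 2 0 1 g'" by (rule right_cancellativeD[OF F_canc g(1) g'(1)])
  thus "arc X 2 0 1 t = arc X 2 0 1 t'"
    using triv_arc[OF \<psi> g(1) upt_in_Delta, of 0 1] triv_arc[OF \<psi> g'(1) upt_in_Delta, of 0 1] g g'
    by simp
qed

end

theorem partial_group_iff:
  "partial_group X \<longleftrightarrow>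
     simplicial_set X \<and> reduced X \<and> N_simplicial X \<and> unit_extensions X \<and> right_cancellative X"
proof
  assume "partial_group X"
  then obtain \<nu> where "partial_group_with_inversion X \<nu>"
    unfolding partial_group_def
    by (metis partial_group_with_inversion.intro partial_group_with_inversion_axioms.intro
        reduced_N.intro reduced_N_axioms.intro simplicial.intro)
  thus "simplicial_set X \<and> reduced X \<and> N_simplicial X \<and> unit_extensions X \<and> right_cancellative X"
    using partial_group_with_inversion.unit_extensions partial_group_with_inversion.right_cancellative
    by (auto simp: partial_group_with_inversion_def reduced_N_def reduced_N_axioms_def simplicial_def)
next
  assume "simplicial_set X \<and> reduced X \<and> N_simplicial X \<and> unit_extensions X \<and> right_cancellative X"
  hence "inversion_construction X"
    by (intro inversion_construction.intro reduced_N.intro simplicial.intro reduced_N_axioms.intro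
        inversion_construction_axioms.intro) auto
  thus "partial_group X"
    using inversion_construction.inversion_simplex_inv
    by (auto simp: partial_group_def inversion_construction_def reduced_N_def reduced_N_axioms_def
        simplicial_def)
qed

theorem theoremA:
  fixes X :: "'x sset" and B :: "'b sset" and F :: "'f sset"
    and \<tau> :: "nat \<Rightarrow> 'x \<Rightarrow> 'b"
  assumes "simplicial_set X" and "simplicial_set B" and "simplicial_set F"
    and "fibre_bundle X B F \<tau>"
    and "partial_group B" and "partial_group F"
  shows "partial_group X"
proof -
  have B: "reduced B" "N_simplicial B" "unit_extensions B" "right_cancellative B"
    and F: "reduced F" "N_simplicial F" "unit_extensions F" "right_cancellative F"
    using assms(5,6) unfolding partial_group_iff by blast+
  interpret reduced_fibre_bundle X B F \<tau>
    by unfold_locales (use assms(1-4) B(1,2) F(1,2) in blast)+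
  show ?thesis
    unfolding partial_group_iff
    using assms(1) reduced_total N_simplicial_total unit_extensions_total[OF B(3) F(3)]
      right_cancellative_total[OF B(4) F(4)] by blast
qed

end
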